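(* Let $P$ be a finite poset with an interval representation $\{[\ell(x),r(x)] : x\in P\}$ in which every interval has length $0$ or $1$ and no two elements are assigned the same interval. Let $Q$ be the subposet of elements assigned length-$1$ intervals, and partition $Q$ into antichains $A_1,\dots,A_t$ by successively removing minimal elements ($A_1$ the minimal elements of $Q$, $A_2$ the minimal elements of $Q\setminus A_1$, etc.). For $1\le i\le t$ let $p_i=\min\{r(x): x\in A_i\}$. Let $D_0$ be the set of length-$0$ elements $[c,c]$ with $c\le p_1$, $D_i$ (for $1\le i\le t-1$) those with $c\in(p_i,p_{i+1}]$, and $D_t$ those with $c>p_t$. Then: (a) a length-$1$ element belongs to $A_i$ if and only if its interval contains $p_i$; (b) every element of $A_{i+2}$ is greater in $P$ than every element of $D_i$, for $0\le i\le t-2$; (c) every element of $D_i$ is greater in $P$ than every element of $A_{i-1}$, for $2\le i\le t$; (d) every element of $A_j$ is greater in $P$ than every element of $A_i$ whenever $j\ge i+2$.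
   Context: Posets are finite and reflexive. An interval representation of a poset $P$ assigns to each element $x$ a closed bounded interval $[\ell(x), r(x)]$ (possibly degenerate) such that for distinct $x,y$, $x<y$ in $P$ if and only if $r(x)<\ell(y)$. *)

theory Defs
  imports Main "HOL-Library.Multiset" Complex_Main
begin

definition minimals :: "'a rel \<Rightarrow> 'a set \<Rightarrow> 'a set" where
  "minimals R S = {x \<in> S. \<not> (\<exists>y\<in>S. y \<noteq> x \<and> (y, x) \<in> R)}"

fun remaining :: "'a rel \<Rightarrow> 'a set \<Rightarrow> nat \<Rightarrow> 'a set" where
  "remaining R Q 0 = Q"
| "remaining R Q (Suc n) = remaining R Q n - minimals R (remaining R Q n)"

text \<open>The i-th antichain A_i (1-indexed): minimal elements of Q minus A_1,...,A_(i-1).\<close>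
definition layer :: "'a rel \<Rightarrow> 'a set \<Rightarrow> nat \<Rightarrow> 'a set" where
  "layer R Q i = minimals R (remaining R Q (i - 1))"

definition num_layers :: "'a rel \<Rightarrow> 'a set \<Rightarrow> nat" where
  "num_layers R Q = (LEAST n. remaining R Q n = {})"

end

theory Submission
  imports Defs
begin

text \<open>In an interval order an element of a set is minimal exactly when its interval starts no
later than the smallest right endpoint \<open>m\<close> of the set.  For unit intervals the layer removed
from what remains is therefore the set of intervals containing \<open>m\<close>, and everything left over
starts after \<open>m\<close>; in particular \<open>p\<^sub>i\<close> is the \<open>m\<close> of the \<open>i\<close>-th stage.  Since \<open>p\<^sub>i\<^sub>+\<^sub>1\<close> is the right
end of an interval starting after \<open>p\<^sub>i\<close>, we get \<open>p\<^sub>i + 1 < p\<^sub>i\<^sub>+\<^sub>1\<close>.  Every interval of \<open>A\<^sub>i\<close> ends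
by \<open>p\<^sub>i + 1\<close> and every interval of a later layer starts after \<open>p\<^sub>i\<close>, which yields (b)--(d).\<close>

lemma minimals_subset: "minimals R S \<subseteq> S"
  by (auto simp: minimals_def)

lemma remaining_subset: "remaining R Q k \<subseteq> Q"
  by (induction k) auto

lemma remaining_antimono: "j \<le> k \<Longrightarrow> remaining R Q k \<subseteq> remaining R Q j"
  by (induction k) (auto simp: le_Suc_eq)

lemma layer_subset: "layer R Q i \<subseteq> Q"
  unfolding layer_def by (rule order_trans[OF minimals_subset remaining_subset])

lemma remaining_diff_Suc: "remaining R Q k - remaining R Q (Suc k) = layer R Q (Suc k)"
  using minimals_subset[of R "remaining R Q k"] by (auto simp: layer_def)

lemma mem_layer_if_not_remaining:
  "x \<in> Q \<Longrightarrow> x \<notin> remaining R Q k \<Longrightarrow> \<exists>j<k. x \<in> layer R Q (Suc j)"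
proof (induction k)
  case (Suc k)
  then show ?case
    using remaining_diff_Suc[of R Q k] by (cases "x \<in> remaining R Q k") (auto intro: less_SucI)
qed simp

lemma minimals_interval_order:
  fixes l r :: "'a \<Rightarrow> real"
  assumes "finite S"
    and rep: "\<And>x y. x \<in> S \<Longrightarrow> y \<in> S \<Longrightarrow> x \<noteq> y \<Longrightarrow> (x, y) \<in> R \<longleftrightarrow> r x < l y"
    and "\<And>x. x \<in> S \<Longrightarrow> l x \<le> r x"
  shows "minimals R S = {x \<in> S. l x \<le> Min (r ` S)}"
proof -
  have "(\<nexists>y. y \<in> S \<and> y \<noteq> x \<and> (y, x) \<in> R) \<longleftrightarrow> l x \<le> Min (r ` S)" if "x \<in> S" for x
  proof -
    have "(\<nexists>y. y \<in> S \<and> y \<noteq> x \<and> (y, x) \<in> R) \<longleftrightarrow> (\<forall>y\<in>S. l x \<le> r y)"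
      using rep[of _ x] assms(3) \<open>x \<in> S\<close> by (force simp: not_less)
    also have "\<dots> \<longleftrightarrow> l x \<le> Min (r ` S)"
      using \<open>finite S\<close> \<open>x \<in> S\<close> by (subst Min_ge_iff) auto
    finally show ?thesis .
  qed
  then show ?thesis by (auto simp: minimals_def)
qed

locale unit_interval_order =
  fixes Q :: "'a set" and R :: "'a rel" and l r :: "'a \<Rightarrow> real"
  assumes finite_Q: "finite Q"
    and related_iff: "\<And>x y. x \<in> Q \<Longrightarrow> y \<in> Q \<Longrightarrow> x \<noteq> y \<Longrightarrow> (x, y) \<in> R \<longleftrightarrow> r x < l y"
    and unit_length: "\<And>x. x \<in> Q \<Longrightarrow> r x = l x + 1"
begin

abbreviation "rest \<equiv> remaining R Q"

definition layer_point :: "nat \<Rightarrow> real" where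
  "layer_point i = Min (r ` layer R Q i)"

lemma finite_remaining: "finite (rest k)"
  using finite_subset[OF remaining_subset finite_Q] .

lemma minimals_remaining: "minimals R (rest k) = {x \<in> rest k. l x \<le> Min (r ` rest k)}"
proof (rule minimals_interval_order[OF finite_remaining])
  show "(x, y) \<in> R \<longleftrightarrow> r x < l y" if "x \<in> rest k" "y \<in> rest k" "x \<noteq> y" for x y
    using that remaining_subset[of R Q k] related_iff by blast
  show "l x \<le> r x" if "x \<in> rest k" for x
    using that remaining_subset[of R Q k] unit_length by fastforce
qed

lemma layer_Suc_eq: "layer R Q (Suc k) = {x \<in> rest k. l x \<le> Min (r ` rest k)}"
  by (simp add: layer_def minimals_remaining)

lemma remaining_Suc_eq: "rest (Suc k) = {x \<in> rest k. Min (r ` rest k) < l x}"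
  by (auto simp: minimals_remaining)

lemma argmin_in_layer:
  assumes "rest k \<noteq> {}"
  obtains y where "y \<in> layer R Q (Suc k)" and "r y = Min (r ` rest k)"
proof -
  have "Min (r ` rest k) \<in> r ` rest k"
    using finite_remaining assms by (intro Min_in) auto
  then obtain y where y: "y \<in> rest k" "r y = Min (r ` rest k)"
    by (metis imageE)
  moreover have "l y \<le> r y"
    using unit_length remaining_subset y(1) by fastforce
  ultimately show thesis
    using that by (auto simp: layer_Suc_eq)
qed

lemma card_remaining_le: "card (rest k) \<le> card Q - k"
proof (induction k)
  case (Suc k)
  show ?case
  proof (cases "rest k = {}")
    case True
    then show ?thesis by simp
  next
    case False
    then obtain y where "y \<in> layer R Q (Suc k)"
      by (rule argmin_in_layer)
    then have "rest (Suc k) \<subset> rest k"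
      using remaining_diff_Suc[of R Q k] by auto
    then have "card (rest (Suc k)) < card (rest k)"
      by (rule psubset_card_mono[OF finite_remaining])
    with Suc.IH show ?thesis by linarith
  qed
qed simp

lemma remaining_empty_iff: "rest k = {} \<longleftrightarrow> num_layers R Q \<le> k"
proof
  assume "rest k = {}"
  then show "num_layers R Q \<le> k"
    unfolding num_layers_def by (rule Least_le)
next
  have "rest (card Q) = {}"
    using card_remaining_le[of "card Q"] finite_remaining by simp
  then have "rest (num_layers R Q) = {}"
    unfolding num_layers_def by (rule LeastI)
  then show "num_layers R Q \<le> k \<Longrightarrow> rest k = {}"
    using remaining_antimono[of "num_layers R Q" k R Q] by blast
qed

lemma layer_point_Suc:
  assumes "k < num_layers R Q"
  shows "layer_point (Suc k) = Min (r ` rest k)"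
proof -
  have "rest k \<noteq> {}"
    using assms remaining_empty_iff by simp
  then obtain y where y: "y \<in> layer R Q (Suc k)" "r y = Min (r ` rest k)"
    by (rule argmin_in_layer)
  have sub: "layer R Q (Suc k) \<subseteq> rest k"
    by (auto simp: layer_Suc_eq)
  have "Min (r ` rest k) \<le> layer_point (Suc k)"
    unfolding layer_point_def using y(1) sub finite_remaining
    by (intro Min_antimono) auto
  moreover have "layer_point (Suc k) \<le> r y"
    unfolding layer_point_def using y(1) sub finite_subset[OF sub finite_remaining] by simp
  ultimately show ?thesis
    using y(2) by simp
qed

lemma layer_point_attained:
  assumes "1 \<le> i" and "i \<le> num_layers R Q"
  obtains y where "y \<in> layer R Q i" and "r y = layer_point i"
proof -
  obtain k where k: "i = Suc k" "k < num_layers R Q"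
    using assms by (cases i) auto
  then have "rest k \<noteq> {}"
    using remaining_empty_iff by simp
  then obtain y where "y \<in> layer R Q (Suc k)" "r y = Min (r ` rest k)"
    by (rule argmin_in_layer)
  then show thesis
    using that layer_point_Suc k by auto
qed

lemma layer_point_less_left:
  assumes "1 \<le> i" and "i < j" and "j \<le> num_layers R Q" and "y \<in> layer R Q j"
  shows "layer_point i < l y"
proof -
  obtain a b where ab: "i = Suc a" "j = Suc b"
    using assms by (cases i; cases j) auto
  have "Suc a \<le> b"
    using assms(2) ab by simp
  then have "rest b \<subseteq> rest (Suc a)"
    by (rule remaining_antimono)
  moreover have "y \<in> rest b"
    using assms(4) ab by (simp add: layer_Suc_eq)
  ultimately have "y \<in> rest (Suc a)"
    by blast
  then have "Min (r ` rest a) < l y"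
    using remaining_Suc_eq[of a] by blast
  then show ?thesis
    using layer_point_Suc[of a] assms ab by simp
qed

lemma layer_point_gap:
  assumes "1 \<le> i" and "i < num_layers R Q"
  shows "layer_point i + 1 < layer_point (Suc i)"
proof -
  have "1 \<le> Suc i" "Suc i \<le> num_layers R Q"
    using assms by simp_all
  then obtain z where z: "z \<in> layer R Q (Suc i)" "r z = layer_point (Suc i)"
    by (rule layer_point_attained)
  have "layer_point i < l z"
    using assms z(1) by (intro layer_point_less_left[of i "Suc i"]) auto
  moreover have "r z = l z + 1"
    using unit_length layer_subset[of R Q "Suc i"] z(1) by blast
  ultimately show ?thesis
    using z(2) by simp
qed

lemma mem_layer_iff:
  assumes "1 \<le> i" and "i \<le> num_layers R Q" and "x \<in> Q"
  shows "x \<in> layer R Q i \<longleftrightarrow> l x \<le> layer_point i \<and> layer_point i \<le> r x"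
proof -
  obtain k where k: "i = Suc k" "k < num_layers R Q"
    using assms by (cases i) auto
  have point: "layer_point i = Min (r ` rest k)"
    using layer_point_Suc k by simp
  show ?thesis
  proof
    assume "x \<in> layer R Q i"
    then show "l x \<le> layer_point i \<and> layer_point i \<le> r x"
      using k point finite_remaining by (auto simp: layer_Suc_eq)
  next
    assume x: "l x \<le> layer_point i \<and> layer_point i \<le> r x"
    show "x \<in> layer R Q i"
    proof (cases "x \<in> rest k")
      case True
      then show ?thesis
        using x point k by (simp add: layer_Suc_eq)
    next
      case False
      text \<open>Then \<open>x\<close> lies in an earlier layer, whose intervals all end before \<open>layer_point i\<close>.\<close>
      then obtain j where j: "j < k" "x \<in> layer R Q (Suc j)"
        using assms(3) mem_layer_if_not_remaining[of x Q R k] by blast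
      obtain y where y: "y \<in> layer R Q i" "r y = layer_point i"
        using assms(1,2) by (rule layer_point_attained)
      have "l x \<le> layer_point (Suc j)"
        using j k point finite_remaining layer_point_Suc[of j]
        by (auto simp: layer_Suc_eq)
      moreover have "layer_point (Suc j) < l y"
        using j k y(1) by (intro layer_point_less_left[of "Suc j" i y]) auto
      moreover have "r x = l x + 1" "r y = l y + 1"
        using unit_length assms(3) layer_subset[of R Q i] y(1) by blast+
      ultimately show ?thesis
        using x y(2) by linarith
    qed
  qed
qed

lemma layer_right_le:
  assumes "1 \<le> i" and "i \<le> num_layers R Q" and "x \<in> layer R Q i"
  shows "r x \<le> layer_point i + 1"
proof -
  have "x \<in> Q"
    using layer_subset[of R Q i] assms(3) by blast
  then show ?thesis
    using assms mem_layer_iff[of i x] unit_length[of x] by simp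
qed

lemma layer_right_less_next_point:
  assumes "1 \<le> i" and "i < num_layers R Q" and "x \<in> layer R Q i"
  shows "r x < layer_point (Suc i)"
  using layer_right_le[of i x] layer_point_gap[of i] assms by simp

lemma layer_right_less_left:
  assumes "1 \<le> i" and "i + 2 \<le> j" and "j \<le> num_layers R Q"
    and "x \<in> layer R Q i" and "y \<in> layer R Q j"
  shows "r x < l y"
proof -
  have "r x < layer_point (Suc i)"
    using assms by (intro layer_right_less_next_point) auto
  also have "layer_point (Suc i) < l y"
    using assms by (intro layer_point_less_left) auto
  finally show ?thesis .
qed

end

lemma unit_interval_order_unit_intervals:
  fixes l r :: "'a \<Rightarrow> real"
  assumes "finite P" and rep: "\<forall>x\<in>P. \<forall>y\<in>P. x \<noteq> y \<longrightarrow> ((x, y) \<in> R \<longleftrightarrow> r x < l y)"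
  shows "unit_interval_order {x \<in> P. r x - l x = 1} R l r"
proof
  show "finite {x \<in> P. r x - l x = 1}"
    using \<open>finite P\<close> by simp
  show "(x, y) \<in> R \<longleftrightarrow> r x < l y"
    if "x \<in> {x \<in> P. r x - l x = 1}" "y \<in> {x \<in> P. r x - l x = 1}" "x \<noteq> y" for x y
    using that rep by blast
qed simp

lemma related_if_right_less_left:
  fixes l r :: "'a \<Rightarrow> real"
  assumes rep: "\<forall>x\<in>P. \<forall>y\<in>P. x \<noteq> y \<longrightarrow> ((x, y) \<in> R \<longleftrightarrow> r x < l y)"
    and "x \<in> P" and "y \<in> P" and "l y \<le> r y" and "r x < l y"
  shows "x \<noteq> y \<and> (x, y) \<in> R"
proof -
  have "x \<noteq> y"
    using assms(4,5) by auto
  then show ?thesis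
    using assms rep by blast
qed

theorem mainTheorem8:
  fixes P :: "'a set" and R :: "'a rel" and l r :: "'a \<Rightarrow> real"
  assumes fin: "finite P"
    and po: "partial_order_on P R"
    and rep: "\<forall>x\<in>P. \<forall>y\<in>P. x \<noteq> y \<longrightarrow> ((x, y) \<in> R \<longleftrightarrow> r x < l y)"
    and len: "\<forall>x\<in>P. r x - l x = 0 \<or> r x - l x = 1"
    and inj: "inj_on (\<lambda>x. (l x, r x)) P"
  defines "Q \<equiv> {x \<in> P. r x - l x = 1}"
    and "Z \<equiv> {x \<in> P. r x - l x = 0}"
  defines "t \<equiv> num_layers R Q"
    and "A \<equiv> layer R Q"
  defines "p \<equiv> (\<lambda>i. Min (r ` A i))"
  defines "D \<equiv> (\<lambda>i. if i = 0 then {x \<in> Z. l x \<le> p 1}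
                     else if i < t then {x \<in> Z. p i < l x \<and> l x \<le> p (i + 1)}
                     else {x \<in> Z. p t < l x})"
  shows "(\<forall>i. 1 \<le> i \<and> i \<le> t \<longrightarrow> (\<forall>x\<in>Q. x \<in> A i \<longleftrightarrow> l x \<le> p i \<and> p i \<le> r x))
       \<and> (\<forall>i. i + 2 \<le> t \<longrightarrow> (\<forall>x\<in>D i. \<forall>y\<in>A (i + 2). x \<noteq> y \<and> (x, y) \<in> R))
       \<and> (\<forall>i. 2 \<le> i \<and> i \<le> t \<longrightarrow> (\<forall>x\<in>A (i - 1). \<forall>y\<in>D i. x \<noteq> y \<and> (x, y) \<in> R))
       \<and> (\<forall>i j. 1 \<le> i \<and> i + 2 \<le> j \<and> j \<le> t \<longrightarrow> (\<forall>x\<in>A i. \<forall>y\<in>A j. x \<noteq> y \<and> (x, y) \<in> R))"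
proof -
  have QP: "Q \<subseteq> P"
    by (auto simp: Q_def)
  interpret unit_interval_order Q R l r
    unfolding Q_def using fin rep by (rule unit_interval_order_unit_intervals)
  have p: "p = layer_point"
    by (simp add: fun_eq_iff p_def A_def layer_point_def)
  have related: "x \<noteq> y \<and> (x, y) \<in> R" if "x \<in> P" "y \<in> P" "r x < l y" for x y
    using related_if_right_less_left[OF rep that(1,2) _ that(3)] len that(2) by force
  have A_P: "A i \<subseteq> P" for i
    using layer_subset[of R Q i] QP unfolding A_def by blast
  have D_P: "D i \<subseteq> P" and D_point: "x \<in> D i \<Longrightarrow> r x = l x" for i x
    by (auto simp: D_def Z_def split: if_splits)
  have a: "\<forall>i. 1 \<le> i \<and> i \<le> t \<longrightarrow> (\<forall>x\<in>Q. x \<in> A i \<longleftrightarrow> l x \<le> p i \<and> p i \<le> r x)"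
    using mem_layer_iff by (simp add: p A_def t_def)
  have b: "x \<noteq> y \<and> (x, y) \<in> R" if "i + 2 \<le> t" "x \<in> D i" "y \<in> A (i + 2)" for i x y
  proof (rule related)
    have "r x \<le> p (i + 1)"
      using that D_point[of x i] by (auto simp: D_def split: if_splits)
    also have "p (i + 1) < l y"
      using that unfolding p A_def t_def by (intro layer_point_less_left) auto
    finally show "r x < l y" .
  qed (use that A_P D_P in blast)+
  have c: "x \<noteq> y \<and> (x, y) \<in> R" if "2 \<le> i" "i \<le> t" "x \<in> A (i - 1)" "y \<in> D i" for i x y
  proof (rule related)
    have "r x < p (Suc (i - 1))"
      using that unfolding p A_def t_def by (intro layer_right_less_next_point) auto
    also have "p (Suc (i - 1)) < l y"
      using that by (auto simp: D_def split: if_splits)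
    finally show "r x < l y" .
  qed (use that A_P D_P in blast)+
  have d: "x \<noteq> y \<and> (x, y) \<in> R"
    if "1 \<le> i" "i + 2 \<le> j" "j \<le> t" "x \<in> A i" "y \<in> A j" for i j x y
  proof (rule related)
    show "r x < l y"
      using that unfolding A_def t_def by (rule layer_right_less_left)
  qed (use that A_P in blast)+
  show ?thesis
    using a b c d by blast
qed

end
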